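(* Consider an open quantum system on a finite-dimensional Hilbert space $\mathcal H$ with Hamiltonian $H$. Let $W_1,\dots,W_N$ be observables commuting with $H$, each positive semidefinite with smallest eigenvalue $0$; for $n\in\{1,\dots,N\}$ let $\widetilde W_n=\sum_{\lambda=1}^nW_\lambda$ and let $d_n$ be the smallest eigenvalue of $\widetilde W_n$. Fix $n<N$. Suppose that with coupling operators $L_1,\dots,L_M$ one has $\mathcal G_M(\widetilde W_n-d_n)\le-c(\widetilde W_n-d_n)$ for some $c>0$, where $\mathcal G_M(X)=\sum_{k=1}^M\mathcal G(X)_{L_k}$. Let $L_{M+1},\dots,L_K$ be additional coupling operators, and let $\mathcal G(X)=\sum_{k=1}^K\mathcal G(X)_{L_k}$ be the generator of the system with all couplings $L_1,\dots,L_K$. If $\mathcal G(W_{n+1})+\sum_{k=M+1}^K\mathcal G(\widetilde W_n)_{L_k}\le -cW_{n+1}+c(d_{n+1}-d_n)$, then $\widetilde W_{n+1}$ is asymptotically ground-state stable for the system with couplings $L_1,\dots,L_K$.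
   Context: With couplings $L_1,\dots,L_K$, the density state (positive semidefinite, trace one) evolves by $\dot\rho_t=-i[H,\rho_t]+\sum_{k=1}^K\big(L_k\rho_tL_k^\dagger-\tfrac12L_k^\dagger L_k\rho_t-\tfrac12\rho_tL_k^\dagger L_k\big)$. Single-channel generator component: $\mathcal G(X)_{L_k}=L_k^\dagger XL_k-\tfrac12L_k^\dagger L_kX-\tfrac12XL_k^\dagger L_k$ (constants are identified with multiples of the identity). For $X$ commuting with $H$, $\frac{d}{dt}\operatorname{tr}(X\rho_t)=\operatorname{tr}(\mathcal G(X)\rho_t)$. An observable $X$ with smallest eigenvalue $d$ is asymptotically ground-state stable if $\operatorname{tr}(X\rho_t)\to d$ as $t\to\infty$ for every initial density state. *)

theory Defs
  imports "HOL-Analysis.Analysis"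
begin

type_synonym 'n cmat = "complex^'n^'n"

definition adj :: "'n::finite cmat \<Rightarrow> 'n cmat" where
  "adj A = (\<chi> i j. cnj (A $ j $ i))"

definition hermitian :: "'n::finite cmat \<Rightarrow> bool" where
  "hermitian A \<longleftrightarrow> adj A = A"

definition csc :: "complex \<Rightarrow> 'n::finite cmat \<Rightarrow> 'n cmat" where
  "csc c A = (\<chi> i j. c * A $ i $ j)"

definition psd :: "'n::finite cmat \<Rightarrow> bool" where
  "psd A \<longleftrightarrow> (\<forall>v::complex^'n.
     let q = (\<Sum>i\<in>UNIV. cnj (v $ i) * (A *v v) $ i) in Im q = 0 \<and> Re q \<ge> 0)"

definition loewner_le :: "'n::finite cmat \<Rightarrow> 'n cmat \<Rightarrow> bool" where
  "loewner_le A B \<longleftrightarrow> psd (B - A)"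

definition eigvals :: "'n::finite cmat \<Rightarrow> real set" where
  "eigvals A = {r. \<exists>v::complex^'n. v \<noteq> 0 \<and> A *v v = complex_of_real r *s v}"

definition min_eig :: "'n::finite cmat \<Rightarrow> real" where
  "min_eig A = Min (eigvals A)"

definition density :: "'n::finite cmat \<Rightarrow> bool" where
  "density \<rho> \<longleftrightarrow> psd \<rho> \<and> trace \<rho> = 1"

definition gen_comp :: "'n::finite cmat \<Rightarrow> 'n cmat \<Rightarrow> 'n cmat" where
  "gen_comp L X = adj L ** X ** L - (1/2) *\<^sub>R (adj L ** L ** X) - (1/2) *\<^sub>R (X ** adj L ** L)"

definition gen :: "(nat \<Rightarrow> 'n::finite cmat) \<Rightarrow> nat set \<Rightarrow> 'n cmat \<Rightarrow> 'n cmat" where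
  "gen L S X = (\<Sum>k\<in>S. gen_comp (L k) X)"

definition lindblad :: "'n::finite cmat \<Rightarrow> (nat \<Rightarrow> 'n cmat) \<Rightarrow> nat \<Rightarrow> 'n cmat \<Rightarrow> 'n cmat" where
  "lindblad H L K \<rho> = csc (- \<i>) (H ** \<rho> - \<rho> ** H)
     + (\<Sum>k\<in>{1..K}. L k ** \<rho> ** adj (L k) - (1/2) *\<^sub>R (adj (L k) ** L k ** \<rho>)
                      - (1/2) *\<^sub>R (\<rho> ** adj (L k) ** L k))"

definition gs_stable :: "'n::finite cmat \<Rightarrow> (nat \<Rightarrow> 'n cmat) \<Rightarrow> nat \<Rightarrow> 'n cmat \<Rightarrow> bool" where
  "gs_stable H L K X \<longleftrightarrow>
     (\<forall>\<rho>::real \<Rightarrow> 'n cmat. density (\<rho> 0) \<and>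
        (\<forall>t\<ge>0. (\<rho> has_vector_derivative lindblad H L K (\<rho> t)) (at t within {0..}))
        \<longrightarrow> ((\<lambda>t. trace (X ** \<rho> t)) \<longlongrightarrow> complex_of_real (min_eig X)) at_top)"

end

theory Submission
  imports Defs
begin

text \<open>Let \<open>Y = W(n+1) - d(n+1) I\<close>, where \<open>W(m)\<close> is the partial sum of the observables.
  As \<open>d(n+1)\<close> is the smallest eigenvalue of the Hermitian matrix \<open>W(n+1)\<close>, \<open>Y\<close> is positive
  semidefinite; it commutes with \<open>H\<close>. Splitting the couplings into \<open>1..M\<close> and \<open>M+1..K\<close>, the sum
  of the two hypotheses is exactly the Lyapunov inequality \<open>G(Y) \<le> -c Y\<close>. Since the Lindblad
  flow preserves density states, \<open>f(t) = tr(Y \<rho>(t))\<close> is nonnegative and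
  \<open>f' = tr(G(Y) \<rho>(t)) \<le> -c f\<close>, so \<open>f(t) \<le> exp(-c t) f(0) \<rightarrow> 0\<close>, i.e.
  \<open>tr(W(n+1) \<rho>(t)) \<rightarrow> d(n+1)\<close>.

  Positivity of the flow is a barrier argument: let \<open>t0\<close> be the first time at which
  \<open>\<rho>(t) + \<epsilon> exp(\<alpha> t) I\<close> acquires a kernel vector \<open>w\<close>. The Lindblad operator maps a
  positive semidefinite matrix with kernel vector \<open>w\<close> to one with nonnegative form at \<open>w\<close>, so
  for \<open>\<alpha>\<close> larger than the forms of the Lindblad image of \<open>I\<close> on unit vectors, the form at \<open>w\<close>
  would be strictly increasing at \<open>t0\<close>, although it decreased to \<open>0\<close> there.\<close>

section \<open>Matrix algebra\<close>

definition cinner :: "complex^'n::finite \<Rightarrow> complex^'n \<Rightarrow> complex" where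
  "cinner v w = (\<Sum>i\<in>UNIV. cnj (v$i) * w$i)"

lemma psd_iff_cinner:
  "psd A \<longleftrightarrow> (\<forall>v. Im (cinner v (A *v v)) = 0 \<and> Re (cinner v (A *v v)) \<ge> 0)"
  by (simp add: psd_def cinner_def Let_def)

lemma matrix_add_rdistrib: "((A::'n::finite cmat) + B) ** C = A ** C + B ** C"
  by (vector matrix_matrix_mult_def sum.distrib distrib_right)

lemma matrix_diff_ldistrib: "(A::'n::finite cmat) ** (B - C) = A ** B - A ** C"
  by (vector matrix_matrix_mult_def sum_subtractf right_diff_distrib)

lemma matrix_diff_rdistrib: "((A::'n::finite cmat) - B) ** C = A ** C - B ** C"
  by (vector matrix_matrix_mult_def sum_subtractf left_diff_distrib)

lemma matrix_mul_scaleR_left: "((r::real) *\<^sub>R (A::'n::finite cmat)) ** B = r *\<^sub>R (A ** B)"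
  by (simp add: scalar_matrix_assoc)

lemma matrix_mul_scaleR_right: "(A::'n::finite cmat) ** ((r::real) *\<^sub>R B) = r *\<^sub>R (A ** B)"
  by (simp add: matrix_scalar_ac scalar_matrix_assoc)

lemma matrix_mul_csc_left: "csc c (A::'n::finite cmat) ** B = csc c (A ** B)"
  by (simp add: csc_def matrix_matrix_mult_def vec_eq_iff sum_distrib_left mult.assoc)

lemma matrix_mul_csc_right: "(A::'n::finite cmat) ** csc c B = csc c (A ** B)"
  by (simp add: csc_def matrix_matrix_mult_def vec_eq_iff sum_distrib_left mult_ac)

lemma matrix_mul_sum_left: "(\<Sum>k\<in>S. (A k::'n::finite cmat)) ** B = (\<Sum>k\<in>S. A k ** B)"
  by (induct S rule: infinite_finite_induct) (auto simp: matrix_add_rdistrib)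

lemma matrix_mul_sum_right: "(B::'n::finite cmat) ** (\<Sum>k\<in>S. A k) = (\<Sum>k\<in>S. B ** A k)"
  by (induct S rule: infinite_finite_induct) (auto simp: matrix_add_ldistrib)

lemma mat_matrix_mul: "mat c ** (A::'n::finite cmat) = csc c A"
  by (simp add: matrix_matrix_mult_def mat_def csc_def vec_eq_iff if_distrib if_distribR
      cong: if_cong)

lemma matrix_mul_mat: "(A::'n::finite cmat) ** mat c = csc c A"
  by (simp add: matrix_matrix_mult_def mat_def csc_def vec_eq_iff if_distrib if_distribR
      mult.commute cong: if_cong)

lemma mat_of_real: "mat (complex_of_real r) = r *\<^sub>R (mat 1 :: 'n::finite cmat)"
  by (auto simp: mat_def vec_eq_iff of_real_def)

lemma csc_add: "csc c (A + B) = csc c A + csc c (B::'n::finite cmat)"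
  by (simp add: csc_def vec_eq_iff algebra_simps)

lemma csc_diff: "csc c (A - B) = csc c A - csc c (B::'n::finite cmat)"
  by (simp add: csc_def vec_eq_iff algebra_simps)

lemma csc_scaleR: "csc c ((r::real) *\<^sub>R A) = r *\<^sub>R csc c (A::'n::finite cmat)"
  by (simp add: csc_def vec_eq_iff scaleR_conv_of_real mult_ac)

lemma csc_diff_swap: "csc c (A - B) = csc (- c) (B - (A::'n::finite cmat))"
  by (simp add: csc_def vec_eq_iff algebra_simps)

lemma adj_adj [simp]: "adj (adj A) = A"
  by (simp add: adj_def vec_eq_iff)

lemma adj_add: "adj (A + B) = adj A + adj B"
  by (simp add: adj_def vec_eq_iff)

lemma adj_diff: "adj (A - B) = adj A - adj B"
  by (simp add: adj_def vec_eq_iff)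

lemma adj_scaleR: "adj ((r::real) *\<^sub>R A) = r *\<^sub>R adj A"
  by (simp add: adj_def vec_eq_iff)

lemma adj_csc: "adj (csc c A) = csc (cnj c) (adj A)"
  by (simp add: adj_def csc_def vec_eq_iff)

lemma adj_matrix_mul: "adj (A ** B) = adj B ** adj (A::'n::finite cmat)"
  by (simp add: adj_def matrix_matrix_mult_def vec_eq_iff mult.commute)

lemma adj_sum: "adj (\<Sum>k\<in>S. A k) = (\<Sum>k\<in>S. adj (A k))"
  by (induct S rule: infinite_finite_induct) (auto simp: adj_add adj_def vec_eq_iff)

lemma bounded_linear_adj: "bounded_linear (adj :: 'n::finite cmat \<Rightarrow> 'n cmat)"
  by (rule linear_conv_bounded_linear[THEN iffD1], rule linearI) (simp_all add: adj_add adj_scaleR)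

lemma hermitian_sum: "(\<And>l. l \<in> S \<Longrightarrow> hermitian (A l)) \<Longrightarrow> hermitian (\<Sum>l\<in>S. A l)"
  unfolding hermitian_def by (simp add: adj_sum)

lemma hermitian_entry: "hermitian P \<Longrightarrow> P$j$k = cnj (P$k$j)"
  unfolding hermitian_def adj_def by (metis (no_types, lifting) vec_lambda_beta complex_cnj_cnj)

lemma trace_csc: "trace (csc c A) = c * trace A"
  by (simp add: trace_def csc_def sum_distrib_left)

lemma trace_scaleR: "trace ((r::real) *\<^sub>R (A::'n::finite cmat)) = r *\<^sub>R trace A"
  by (simp add: trace_def scaleR_sum_right)

lemma trace_sum: "trace (\<Sum>k\<in>S. (A k::'n::finite cmat)) = (\<Sum>k\<in>S. trace (A k))"
  by (induct S rule: infinite_finite_induct) (auto simp: trace_add trace_0[simplified])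

lemma bounded_linear_trace: "bounded_linear (trace :: 'n::finite cmat \<Rightarrow> complex)"
  by (rule linear_conv_bounded_linear[THEN iffD1], rule linearI) (simp_all add: trace_add trace_scaleR)

lemma bounded_linear_trace_mul: "bounded_linear (\<lambda>X. trace ((Y::'n::finite cmat) ** X))"
  by (rule linear_conv_bounded_linear[THEN iffD1], rule linearI)
     (simp_all add: matrix_add_ldistrib trace_add matrix_mul_scaleR_right trace_scaleR)

lemma matrix_vector_mult_csc: "csc c A *v v = c *s (A *v (v::complex^'n::finite))"
  by (simp add: csc_def matrix_vector_mult_def vec_eq_iff sum_distrib_left mult.assoc)

lemma matrix_vector_mult_scaleR: "((r::real) *\<^sub>R A) *v v = r *\<^sub>R (A *v (v::complex^'n::finite))"
  by (simp add: matrix_vector_mult_def vec_eq_iff scaleR_sum_right)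

lemma matrix_vector_mult_scaleR_right: "A *v ((r::real) *\<^sub>R v) = r *\<^sub>R (A *v (v::complex^'n::finite))"
  by (simp add: matrix_vector_mult_def vec_eq_iff scaleR_sum_right vector_scaleR_component
      mult_scaleR_left mult_scaleR_right)

lemma matrix_vector_mult_smult_right: "A *v (c *s v) = c *s (A *v (v::complex^'n::finite))"
  by (simp add: matrix_vector_mult_def vec_eq_iff sum_distrib_left mult_ac)

lemma matrix_vector_mult_sum: "(\<Sum>k\<in>S. A k) *v (v::complex^'n::finite) = (\<Sum>k\<in>S. A k *v v)"
  by (induct S rule: infinite_finite_induct) (auto simp: matrix_vector_mult_add_rdistrib)

lemma matrix_vector_mult_mat: "mat c *v (v::complex^'n::finite) = c *s v"
  by (simp add: matrix_vector_mult_def mat_def vec_eq_iff if_distrib if_distribR cong: if_cong)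

lemma matrix_vector_mult_axis: "(B *v axis k b) $ i = B$i$k * (b::complex)"
  by (simp add: matrix_vector_mult_def axis_def if_distrib if_distribR cong: if_cong)

lemma cinner_add_right: "cinner v (w1 + w2) = cinner v w1 + cinner v w2"
  by (simp add: cinner_def sum.distrib algebra_simps)

lemma cinner_add_left: "cinner (w1 + w2) v = cinner w1 v + cinner w2 v"
  by (simp add: cinner_def sum.distrib algebra_simps)

lemma cinner_diff_right: "cinner v (w1 - w2) = cinner v w1 - cinner v w2"
  by (simp add: cinner_def sum_subtractf algebra_simps)

lemma cinner_smult_right: "cinner v (c *s w) = c * cinner v w"
  by (simp add: cinner_def sum_distrib_left mult_ac)

lemma cinner_smult_left: "cinner (c *s v) w = cnj c * cinner v w"
  by (simp add: cinner_def sum_distrib_left mult_ac)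

lemma cinner_scaleR_right: "cinner v ((r::real) *\<^sub>R w) = r *\<^sub>R cinner v w"
  by (simp add: cinner_def scaleR_sum_right)

lemma cinner_scaleR_left: "cinner ((r::real) *\<^sub>R v) w = r *\<^sub>R cinner v w"
  by (simp add: cinner_def scaleR_sum_right vector_scaleR_component mult_scaleR_left
      mult_scaleR_right)

lemma cinner_zero [simp]: "cinner v 0 = 0" "cinner 0 v = 0"
  by (simp_all add: cinner_def)

lemma cinner_sum_right: "cinner v (\<Sum>k\<in>S. w k) = (\<Sum>k\<in>S. cinner v (w k))"
  by (induct S rule: infinite_finite_induct) (auto simp: cinner_add_right)

lemma cinner_commute: "cinner w v = cnj (cinner v w)"
  by (simp add: cinner_def mult.commute)

lemma cinner_axis_left: "cinner (axis j a) w = cnj a * w$j"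
  by (simp add: cinner_def axis_def if_distrib if_distribR cong: if_cong)

lemma cinner_adj: "cinner v (A *v w) = cinner (adj A *v v) w"
  unfolding cinner_def adj_def matrix_vector_mult_def
  apply (simp add: sum_distrib_left sum_distrib_right)
  apply (subst sum.swap)
  apply (simp add: mult_ac)
  done

lemma hermitian_cinner: "hermitian A \<Longrightarrow> cinner v (A *v w) = cinner (A *v v) w"
  by (simp add: hermitian_def cinner_adj)

lemma hermitian_quadratic_form_real: "hermitian A \<Longrightarrow> Im (cinner v (A *v v)) = 0"
  using hermitian_cinner[of A v v] cinner_commute[of "A *v v" v]
  by (metis cnj.simps(2) neg_equal_zero)

lemma cinner_self: "cinner v v = complex_of_real ((norm v)\<^sup>2)"
proof -
  have "cinner v v = complex_of_real (\<Sum>i\<in>UNIV. (cmod (v$i))\<^sup>2)"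
    unfolding cinner_def of_real_sum by (simp only: complex_norm_square mult.commute)
  moreover have "(\<Sum>i\<in>UNIV. (cmod (v$i))\<^sup>2) = (norm v)\<^sup>2"
    unfolding norm_vec_def L2_set_def by (rule real_sqrt_pow2[symmetric]) (simp add: sum_nonneg)
  ultimately show ?thesis by simp
qed

lemma inner_eq_Re_cinner: "inner x y = Re (cinner x (y::complex^'n::finite))"
  by (simp add: inner_vec_def cinner_def inner_complex_def Re_sum)

lemma cinner_scaleR_quadratic_form:
  "cinner ((r::real) *\<^sub>R v) (A *v (r *\<^sub>R v)) = (r\<^sup>2) *\<^sub>R cinner v (A *v v)"
  by (simp add: matrix_vector_mult_scaleR_right cinner_scaleR_right cinner_scaleR_left
      power2_eq_square)

lemma cinner_minus_mat_quadratic_form: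
  "cinner v ((A - mat c) *v v) = cinner v (A *v v) - c * complex_of_real ((norm v)\<^sup>2)"
  by (simp add: matrix_vector_mult_diff_rdistrib matrix_vector_mult_mat cinner_diff_right
      cinner_smult_right cinner_self)

lemma continuous_on_quadratic_form:
  fixes g :: "'a::topological_space \<Rightarrow> complex^'n::finite" and A :: "'a \<Rightarrow> 'n cmat"
  assumes "continuous_on S g" "continuous_on S A"
  shows "continuous_on S (\<lambda>p. cinner (g p) (A p *v g p))"
proof -
  have "continuous_on S (\<lambda>p. f p $ i)" if "continuous_on S f" for f :: "'a \<Rightarrow> 'b::real_normed_vector^'n" and i
    using that unfolding continuous_on_def by (auto intro: tendsto_vec_nth)
  then show ?thesis
    unfolding cinner_def matrix_vector_mult_def
    by (simp only: vec_lambda_beta) (intro continuous_intros assms)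
qed

section \<open>Positive semidefinite matrices\<close>

lemma quadratic_form_zero_imp_zero:
  fixes B :: "'n::finite cmat"
  assumes "\<And>v. cinner v (B *v v) = 0"
  shows "B = 0"
proof -
  have e: "cinner (axis j a) (B *v axis k b) = cnj a * B$j$k * b" for j k a b
    by (simp add: cinner_axis_left matrix_vector_mult_axis)
  have diag: "B$j$j = 0" for j
    using assms[of "axis j 1"] e[of j 1 j 1] by simp
  have polar: "cinner (axis j 1 + axis k x) (B *v (axis j 1 + axis k x))
      = B$j$j + x * B$j$k + cnj x * B$k$j + cnj x * x * B$k$k" for j k x
    by (simp add: matrix_vector_right_distrib cinner_add_right cinner_add_left e mult_ac)
  have "B$j$k = 0" for j k
  proof -
    have "B$j$k + B$k$j = 0"
      using assms[of "axis j 1 + axis k 1"] polar[of j k 1] diag by simp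
    moreover have "\<i> * (B$j$k - B$k$j) = 0"
      using assms[of "axis j 1 + axis k \<i>"] polar[of j k \<i>] diag by (simp add: right_diff_distrib)
    ultimately show ?thesis by simp
  qed
  then show ?thesis by (simp add: vec_eq_iff)
qed

lemma psd_imp_hermitian: assumes "psd A" shows "hermitian A"
proof -
  have "A - adj A = 0"
  proof (rule quadratic_form_zero_imp_zero)
    fix v
    have "cinner v (adj A *v v) = cnj (cinner v (A *v v))"
      using cinner_adj[of v "adj A" v] cinner_commute[of "A *v v" v] by simp
    moreover have "Im (cinner v (A *v v)) = 0" using assms by (simp add: psd_iff_cinner)
    ultimately show "cinner v ((A - adj A) *v v) = 0"
      by (simp add: matrix_vector_mult_diff_rdistrib cinner_diff_right complex_eq_iff)
  qed
  then show ?thesis by (simp add: hermitian_def)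
qed

lemma psd_add: "psd A \<Longrightarrow> psd B \<Longrightarrow> psd (A + B)"
  by (simp add: psd_iff_cinner matrix_vector_mult_add_rdistrib cinner_add_right)

lemma hermitian_psd_iff_unit_sphere:
  fixes A :: "'n::finite cmat"
  assumes "hermitian A"
  shows "psd A \<longleftrightarrow> (\<forall>x\<in>sphere 0 1. Re (cinner x (A *v x)) \<ge> 0)"
proof (intro iffI ballI)
  assume sphere: "\<forall>x\<in>sphere 0 1. Re (cinner x (A *v x)) \<ge> 0"
  have "Re (cinner v (A *v v)) \<ge> 0" for v
  proof (cases "v = 0")
    case False
    define x where "x = (1 / norm v) *\<^sub>R v"
    have "v = norm v *\<^sub>R x" using False by (simp add: x_def)
    then have "cinner v (A *v v) = (norm v)\<^sup>2 *\<^sub>R cinner x (A *v x)"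
      by (metis cinner_scaleR_quadratic_form)
    then have "Re (cinner v (A *v v)) = (norm v)\<^sup>2 * Re (cinner x (A *v x))" by simp
    moreover have "x \<in> sphere 0 1" using False by (simp add: x_def)
    ultimately show ?thesis using sphere by simp
  qed simp
  then show "psd A"
    using hermitian_quadratic_form_real[OF assms] by (simp add: psd_iff_cinner)
qed (simp add: psd_iff_cinner)

text \<open>The form at \<open>v + s Q v\<close> is \<open>2 s \<parallel>Q v\<parallel>\<^sup>2 + O(s\<^sup>2)\<close>, negative for small \<open>s < 0\<close>
  unless \<open>Q v = 0\<close>.\<close>

lemma psd_quadratic_form_zero_imp_kernel:
  assumes psd: "psd Q" and zero: "cinner v (Q *v v) = 0"
  shows "Q *v v = 0"
proof -
  define w where "w = Q *v v"
  define N where "N = (norm w)\<^sup>2"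
  define a where "a = Re (cinner w (Q *v w))"
  have a: "a \<ge> 0" using psd by (simp add: psd_iff_cinner a_def)
  have vw: "cinner w (Q *v v) = of_real N" by (simp add: w_def N_def cinner_self)
  have wv: "cinner v (Q *v w) = of_real N"
    using hermitian_cinner[OF psd_imp_hermitian[OF psd], of v w] by (simp add: w_def N_def cinner_self)
  have expand: "Re (cinner (v + s *\<^sub>R w) (Q *v (v + s *\<^sub>R w))) = s * (2 * N + s * a)" for s :: real
    using zero vw wv
    by (simp add: matrix_vector_right_distrib matrix_vector_mult_scaleR_right cinner_add_right
        cinner_add_left cinner_scaleR_right cinner_scaleR_left a_def algebra_simps)
  have "N \<le> 0"
  proof (rule ccontr)
    assume "\<not> N \<le> 0"
    define s where "s = - N / (a + 1)"
    have "s < 0" using \<open>\<not> N \<le> 0\<close> a by (simp add: s_def)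
    moreover have "s * a > - 2 * N" using \<open>\<not> N \<le> 0\<close> a
      by (simp add: s_def field_simps add_nonneg_pos)
    ultimately have "s * (2 * N + s * a) < 0" by (simp add: mult_neg_pos)
    moreover have "Re (cinner (v + s *\<^sub>R w) (Q *v (v + s *\<^sub>R w))) \<ge> 0"
      using psd by (simp add: psd_iff_cinner)
    ultimately show False by (simp add: expand)
  qed
  then show ?thesis by (simp add: N_def w_def)
qed

lemma psd_diag_zero_imp_column_zero:
  assumes "psd P" "P$i$i = 0"
  shows "P$j$i = 0"
proof -
  have "cinner (axis i 1) (P *v axis i 1) = 0"
    using assms(2) by (simp add: cinner_axis_left matrix_vector_mult_axis)
  then have "P *v axis i 1 = 0" by (rule psd_quadratic_form_zero_imp_kernel[OF assms(1)])
  then show ?thesis using matrix_vector_mult_axis[of P i 1 j] by simp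
qed

definition outer :: "complex^'n::finite \<Rightarrow> 'n cmat" where
  "outer c = (\<chi> j k. c$j * cnj (c$k))"

lemma trace_outer_mul: "trace (outer c ** \<rho>) = cinner c (\<rho> *v c)"
  unfolding trace_def outer_def matrix_matrix_mult_def cinner_def matrix_vector_mult_def
  apply (simp add: sum_distrib_left)
  apply (subst sum.swap)
  apply (simp add: mult_ac)
  done

lemma outer_matrix_vector_mult: "outer c *v v = cinner c v *s c"
  by (simp add: outer_def matrix_vector_mult_def cinner_def vec_eq_iff sum_distrib_left mult_ac)

text \<open>One step of symmetric Gaussian elimination (a Schur complement). Iterating it writes a
  positive semidefinite matrix as a sum of rank-one terms \<open>outer c\<close>, and
  \<open>tr(outer c \<rho>) = \<langle>c, \<rho> c\<rangle> \<ge> 0\<close>.\<close>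

lemma psd_minus_pivot_outer:
  assumes psd: "psd P" and pivot: "P$i$i \<noteq> 0"
  shows "psd (P - csc (1 / P$i$i) (outer (column i P)))"
proof -
  let ?a = "P$i$i" and ?c = "column i P"
  have h: "hermitian P" by (rule psd_imp_hermitian[OF psd])
  have a_real: "cnj ?a = ?a" using hermitian_entry[OF h, of i i] by simp
  have c: "?c = P *v axis i 1"
    by (simp add: column_def vec_eq_iff matrix_vector_mult_axis)
  have a: "cinner (axis i 1) (P *v axis i 1) = ?a"
    by (simp add: cinner_axis_left matrix_vector_mult_axis)
  show ?thesis
    unfolding psd_iff_cinner
  proof
    fix v
    define \<beta> where "\<beta> = cinner ?c v"
    define \<alpha> where "\<alpha> = - \<beta> / ?a"
    define w where "w = v + \<alpha> *s axis i 1"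
    have vc: "cinner v (P *v axis i 1) = cnj \<beta>"
      using cinner_commute[of v ?c] by (simp add: \<beta>_def c)
    have cv: "cinner (axis i 1) (P *v v) = \<beta>"
      by (simp add: hermitian_cinner[OF h] \<beta>_def c)
    have "cinner w (P *v w) = cinner v (P *v v) + \<alpha> * cnj \<beta> + cnj \<alpha> * \<beta> + cnj \<alpha> * \<alpha> * ?a"
      by (simp add: w_def matrix_vector_right_distrib matrix_vector_mult_smult_right
          cinner_add_right cinner_add_left cinner_smult_right cinner_smult_left vc cv a mult_ac
          distrib_left)
    also have "\<dots> = cinner v (P *v v) - \<beta> * cnj \<beta> / ?a"
      using pivot a_real by (simp add: \<alpha>_def field_simps)
    also have "\<dots> = cinner v ((P - csc (1 / ?a) (outer ?c)) *v v)"
      by (simp add: matrix_vector_mult_diff_rdistrib matrix_vector_mult_csc outer_matrix_vector_mult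
          cinner_diff_right cinner_smult_right \<beta>_def cinner_commute[of v ?c] mult_ac)
    finally have "cinner v ((P - csc (1 / ?a) (outer ?c)) *v v) = cinner w (P *v w)" ..
    then show "Im (cinner v ((P - csc (1 / ?a) (outer ?c)) *v v)) = 0
        \<and> Re (cinner v ((P - csc (1 / ?a) (outer ?c)) *v v)) \<ge> 0"
      using psd by (simp add: psd_iff_cinner)
  qed
qed

definition supported_on :: "'n set \<Rightarrow> 'n::finite cmat \<Rightarrow> bool" where
  "supported_on S P \<longleftrightarrow> (\<forall>j k. j \<notin> S \<or> k \<notin> S \<longrightarrow> P$j$k = 0)"

lemma psd_zero_pivot_supported:
  assumes psd: "psd P" and pivot: "P$i$i = 0" and supp: "supported_on (insert i S) P"
  shows "supported_on S P"
  unfolding supported_on_def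
proof (intro allI impI)
  fix j k assume "j \<notin> S \<or> k \<notin> S"
  then consider "j = i" | "k = i" | "j \<notin> insert i S \<or> k \<notin> insert i S" by auto
  then show "P$j$k = 0"
  proof cases
    case 1
    then show ?thesis
      using psd_diag_zero_imp_column_zero[OF psd pivot, of k]
        hermitian_entry[OF psd_imp_hermitian[OF psd], of i k] by simp
  next
    case 2
    then show ?thesis using psd_diag_zero_imp_column_zero[OF psd pivot] by simp
  next
    case 3
    then show ?thesis using supp unfolding supported_on_def by blast
  qed
qed

lemma pivot_outer_supported:
  assumes h: "hermitian P" and pivot: "P$i$i \<noteq> 0" and supp: "supported_on (insert i S) P"
  shows "supported_on S (P - csc (1 / P$i$i) (outer (column i P)))"
  unfolding supported_on_def
proof (intro allI impI)
  fix j k assume "j \<notin> S \<or> k \<notin> S"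
  have entry: "(P - csc (1 / P$i$i) (outer (column i P)))$j$k
      = P$j$k - P$j$i * cnj (P$k$i) / P$i$i"
    by (simp add: csc_def outer_def column_def)
  consider "j = i" | "k = i" | "j \<notin> insert i S \<or> k \<notin> insert i S"
    using \<open>j \<notin> S \<or> k \<notin> S\<close> by auto
  then show "(P - csc (1 / P$i$i) (outer (column i P)))$j$k = 0"
  proof cases
    case 1
    then show ?thesis using pivot hermitian_entry[OF h, of i k] entry by simp
  next
    case 2
    then show ?thesis using pivot hermitian_entry[OF h, of i i, symmetric] entry by simp
  next
    case 3
    then have "P$j$k = 0" "P$j$i * cnj (P$k$i) = 0"
      using supp unfolding supported_on_def by auto
    then show ?thesis using entry by simp

  qed

qed

lemma trace_mul_psd_supported:
  fixes P \<rho> :: "'n::finite cmat"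
  assumes \<rho>: "psd \<rho>" and "finite S" "psd P" "supported_on S P"
  shows "Im (trace (P ** \<rho>)) = 0 \<and> Re (trace (P ** \<rho>)) \<ge> 0"
  using assms(2-4)
proof (induction S arbitrary: P rule: finite_induct)
  case empty
  then have "P = 0" by (simp add: supported_on_def vec_eq_iff)
  then show ?case by (simp add: trace_def)
next
  case (insert i S)
  show ?case
  proof (cases "P$i$i = 0")
    case True
    then show ?thesis using insert psd_zero_pivot_supported by blast
  next
    case False
    let ?a = "P$i$i" and ?c = "column i P"
    have h: "hermitian P" by (rule psd_imp_hermitian[OF insert.prems(1)])
    have a_real: "Im ?a = 0" using hermitian_entry[OF h, of i i] by (simp add: complex_eq_iff)
    have "Re ?a \<ge> 0"
      using insert.prems(1)[unfolded psd_iff_cinner, rule_format, of "axis i 1"]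
      by (simp add: cinner_axis_left matrix_vector_mult_axis)
    then have a_pos: "Re ?a > 0" using False a_real by (auto simp: complex_eq_iff less_le)
    have IH: "Im (trace ((P - csc (1 / ?a) (outer ?c)) ** \<rho>)) = 0
        \<and> Re (trace ((P - csc (1 / ?a) (outer ?c)) ** \<rho>)) \<ge> 0"
      using insert.IH psd_minus_pivot_outer[OF insert.prems(1) False]
        pivot_outer_supported[OF h False insert.prems(2)] by blast
    have tr: "trace (P ** \<rho>) = trace ((P - csc (1 / ?a) (outer ?c)) ** \<rho>) + cinner ?c (\<rho> *v ?c) / ?a"
      by (simp add: matrix_diff_rdistrib matrix_mul_csc_left trace_sub trace_csc trace_outer_mul)
    have "Im (cinner ?c (\<rho> *v ?c)) = 0" "Re (cinner ?c (\<rho> *v ?c)) \<ge> 0"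
      using \<rho> by (auto simp: psd_iff_cinner)
    then show ?thesis using IH a_real a_pos by (simp add: tr Im_divide Re_divide)
  qed
qed

lemma trace_mul_psd_nonneg:
  fixes P \<rho> :: "'n::finite cmat"
  assumes "psd P" "psd \<rho>"
  shows "Im (trace (P ** \<rho>)) = 0" "Re (trace (P ** \<rho>)) \<ge> 0"
  using trace_mul_psd_supported[OF assms(2) finite assms(1)] by (auto simp: supported_on_def)

section \<open>Eigenvalues of Hermitian matrices\<close>

lemma hermitian_eigvals_finite:
  fixes A :: "'n::finite cmat"
  assumes h: "hermitian A"
  shows "finite (eigvals A)"
proof -
  define g where "g r = (SOME v. v \<noteq> 0 \<and> A *v v = complex_of_real r *s v)" for r
  have g: "g r \<noteq> 0 \<and> A *v g r = complex_of_real r *s g r" if "r \<in> eigvals A" for r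
    using that unfolding eigvals_def g_def by (rule CollectE) (rule someI_ex)
  have orth: "cinner (g s) (g r) = 0" if "r \<in> eigvals A" "s \<in> eigvals A" "r \<noteq> s" for r s
  proof -
    have "complex_of_real r * cinner (g s) (g r) = cinner (g s) (A *v g r)"
      using g[OF that(1)] by (simp add: cinner_smult_right)
    also have "\<dots> = cinner (A *v g s) (g r)" by (rule hermitian_cinner[OF h])
    also have "\<dots> = complex_of_real s * cinner (g s) (g r)"
      using g[OF that(2)] by (simp add: cinner_smult_left)
    finally have "(complex_of_real r - complex_of_real s) * cinner (g s) (g r) = 0"
      by (simp add: algebra_simps)
    then show ?thesis using that(3) by simp
  qed
  have inj: "inj_on g (eigvals A)"
  proof (rule inj_onI, rule ccontr)
    fix r s assume rs: "r \<in> eigvals A" "s \<in> eigvals A" "g r = g s" "r \<noteq> s"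
    then have "cinner (g r) (g r) = 0" using orth[OF rs(1,2)] by simp
    then show False using g[OF rs(1)] by (simp add: cinner_self)
  qed
  have "pairwise orthogonal (g ` eigvals A)"
  proof (clarsimp simp: pairwise_def orthogonal_def inner_eq_Re_cinner)
    fix r s assume "r \<in> eigvals A" "s \<in> eigvals A" "g r \<noteq> g s"
    then show "Re (cinner (g r) (g s)) = 0" using orth[of s r] by fastforce
  qed
  moreover have "0 \<notin> g ` eigvals A" using g by auto
  ultimately have "independent (g ` eigvals A)" by (rule pairwise_orthogonal_independent)
  then have "finite (g ` eigvals A)" by (rule finiteI_independent)
  then show ?thesis using inj finite_imageD by blast
qed

lemma psd_minus_mat_imp_eigval_ge:
  assumes "psd (A - mat (complex_of_real l))" "r \<in> eigvals A"
  shows "l \<le> r"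
proof -
  obtain w where w: "w \<noteq> 0" "A *v w = complex_of_real r *s w"
    using assms(2) by (auto simp: eigvals_def)
  have "0 \<le> Re (cinner w ((A - mat (complex_of_real l)) *v w))"
    using assms(1) by (simp add: psd_iff_cinner)
  also have "\<dots> = (r - l) * (norm w)\<^sup>2"
    using w(2) by (simp add: cinner_minus_mat_quadratic_form cinner_smult_right cinner_self
        left_diff_distrib)
  finally show ?thesis using w(1) by (simp add: zero_le_mult_iff)
qed

text \<open>The minimum of the Rayleigh quotient is attained on the compact unit sphere; the
  minimiser is an eigenvector for the minimum value.\<close>

lemma hermitian_rayleigh_minimum:
  fixes A :: "'n::finite cmat"
  assumes h: "hermitian A"
  obtains l where "l \<in> eigvals A" "psd (A - mat (complex_of_real l))"
proof -
  let ?f = "\<lambda>v. Re (cinner v (A *v v))"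
  have "continuous_on (sphere 0 1) ?f"
    by (intro continuous_intros continuous_on_quadratic_form)
  then obtain u where u: "u \<in> sphere (0::complex^'n) 1" and min: "\<forall>y\<in>sphere 0 1. ?f u \<le> ?f y"
    using continuous_attains_inf[OF compact_sphere _ \<open>continuous_on (sphere 0 1) ?f\<close>] by auto

  define B where "B = A - mat (complex_of_real (?f u))"
  have hB: "hermitian B"
    using h by (simp add: B_def hermitian_def adj_diff adj_def mat_def vec_eq_iff)
  have psdB: "psd B"
    unfolding hermitian_psd_iff_unit_sphere[OF hB]
    using min by (simp add: B_def cinner_minus_mat_quadratic_form)
  have "cinner u (B *v u) = 0"
    using u hermitian_quadratic_form_real[OF h, of u]
    by (simp add: B_def cinner_minus_mat_quadratic_form complex_eq_iff)
  then have "B *v u = 0" by (rule psd_quadratic_form_zero_imp_kernel[OF psdB])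
  then have "A *v u = complex_of_real (?f u) *s u"
    by (simp add: B_def matrix_vector_mult_diff_rdistrib matrix_vector_mult_mat)
  moreover have "u \<noteq> 0" using u by auto
  ultimately have "?f u \<in> eigvals A" unfolding eigvals_def by blast
  then show thesis using psdB that by (simp add: B_def)
qed

lemma hermitian_psd_minus_min_eig:
  fixes A :: "'n::finite cmat"
  assumes "hermitian A"
  shows "psd (A - mat (complex_of_real (min_eig A)))"
proof -
  obtain l where l: "l \<in> eigvals A" "psd (A - mat (complex_of_real l))"
    using hermitian_rayleigh_minimum[OF assms] .
  have "min_eig A = l"
    unfolding min_eig_def
    using hermitian_eigvals_finite[OF assms] l psd_minus_mat_imp_eigval_ge by (intro Min_eqI) auto
  then show ?thesis using l(2) by simp
qed

section \<open>Differential inequalities\<close>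

lemma nonincreasing_if_deriv_nonpos:
  fixes h h' :: "real \<Rightarrow> real"
  assumes deriv: "\<And>t. t \<ge> 0 \<Longrightarrow> (h has_real_derivative h' t) (at t within {0..})"
    and nonpos: "\<And>t. t \<ge> 0 \<Longrightarrow> h' t \<le> 0" and t: "t \<ge> 0"
  shows "h t \<le> h 0"
proof -
  have "\<exists>x\<in>{0..t}. h t - h 0 = (\<lambda>d. h' x * d) (t - 0)"
  proof (rule mvt_very_simple[OF t])
    fix x assume x: "0 \<le> x" "x \<le> t"
    have "(h has_real_derivative h' x) (at x within {0..t})"
      using has_field_derivative_subset[OF deriv[OF x(1)]] by auto
    then show "(h has_derivative (\<lambda>d. h' x * d)) (at x within {0..t})"
      by (simp add: has_field_derivative_def)
  qed
  then obtain x where "x \<in> {0..t}" "h t - h 0 = h' x * t" by auto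
  then show ?thesis using mult_nonpos_nonneg[OF nonpos[of x] t] by simp
qed

lemma gronwall_exp_bound:
  fixes f f' :: "real \<Rightarrow> real"
  assumes deriv: "\<And>t. t \<ge> 0 \<Longrightarrow> (f has_real_derivative f' t) (at t within {0..})"
    and bound: "\<And>t. t \<ge> 0 \<Longrightarrow> f' t \<le> k * f t" and t: "t \<ge> 0"
  shows "f t \<le> exp (k * t) * f 0"
proof -
  define h where "h s = exp (- k * s) * f s" for s
  have "(h has_real_derivative (exp (- k * s) * (f' s - k * f s))) (at s within {0..})"
    if "s \<ge> 0" for s
    unfolding h_def by (rule derivative_eq_intros refl deriv[OF that])+ (simp add: algebra_simps)
  then have "h t \<le> h 0"
    by (rule nonincreasing_if_deriv_nonpos) (use bound t in \<open>auto simp: mult_nonneg_nonpos\<close>)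
  then have "exp (k * t) * (exp (- k * t) * f t) \<le> exp (k * t) * f 0"
    by (simp add: h_def mult_left_mono)
  then show ?thesis by (simp add: exp_minus_inverse mult.assoc[symmetric] exp_add[symmetric])
qed

lemma linear_ode_zero_solution:
  fixes X :: "real \<Rightarrow> 'a::real_inner" and \<Lambda> :: "'a \<Rightarrow> 'a"
  assumes bl: "bounded_linear \<Lambda>" and X0: "X 0 = 0"
    and deriv: "\<And>t. t \<ge> 0 \<Longrightarrow> (X has_vector_derivative \<Lambda> (X t)) (at t within {0..})"
    and t: "t \<ge> 0"
  shows "X t = 0"
proof -
  obtain C where C: "\<And>x. norm (\<Lambda> x) \<le> norm x * C"
    using bounded_linear.pos_bounded[OF bl] by blast
  define f where "f s = X s \<bullet> X s" for s
  have "(f has_real_derivative (2 * (X s \<bullet> \<Lambda> (X s)))) (at s within {0..})" if "s \<ge> 0" for s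
    using bounded_bilinear.has_vector_derivative[OF bounded_bilinear_inner deriv[OF that] deriv[OF that]]
    by (simp add: f_def[abs_def] has_real_derivative_iff_has_vector_derivative inner_commute)
  moreover have "2 * (X s \<bullet> \<Lambda> (X s)) \<le> (2 * C) * f s" for s
  proof -
    have "X s \<bullet> \<Lambda> (X s) \<le> norm (X s) * norm (\<Lambda> (X s))" by (rule norm_cauchy_schwarz)
    also have "\<dots> \<le> norm (X s) * (norm (X s) * C)" by (rule mult_left_mono[OF C]) simp
    finally have "X s \<bullet> \<Lambda> (X s) \<le> norm (X s) * (norm (X s) * C)" .
    then show ?thesis by (simp add: f_def power2_norm_eq_inner[symmetric] power2_eq_square mult_ac)

  qed
  ultimately have "f t \<le> exp ((2 * C) * t) * f 0" by (rule gronwall_exp_bound[OF _ _ t])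
  then have "X t \<bullet> X t \<le> 0" by (simp add: f_def X0)
  then show ?thesis by (metis inner_eq_zero_iff order_antisym inner_ge_zero)


qed

lemma tendsto_zero_if_deriv_le_neg_mult:
  fixes f f' :: "real \<Rightarrow> real"
  assumes c: "c > 0"
    and deriv: "\<And>t. t \<ge> 0 \<Longrightarrow> (f has_real_derivative f' t) (at t within {0..})"
    and decay: "\<And>t. t \<ge> 0 \<Longrightarrow> f' t \<le> (- c) * f t"
    and nonneg: "\<And>t. t \<ge> 0 \<Longrightarrow> 0 \<le> f t"
  shows "(f \<longlongrightarrow> 0) at_top"
proof (rule tendsto_sandwich)
  show "\<forall>\<^sub>F t in at_top. 0 \<le> f t"
    using eventually_ge_at_top[of 0] by eventually_elim (rule nonneg)
  show "\<forall>\<^sub>F t in at_top. f t \<le> exp (- c * t) * f 0"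
    using eventually_ge_at_top[of 0] by eventually_elim (rule gronwall_exp_bound[OF deriv decay])
  have "((\<lambda>t. exp (- c * t)) \<longlongrightarrow> 0) at_top"
    by (rule filterlim_compose[OF exp_at_bot filterlim_tendsto_neg_mult_at_bot[OF tendsto_const]])
      (use c in \<open>auto intro: filterlim_ident\<close>)
  then show "((\<lambda>t. exp (- c * t) * f 0) \<longlongrightarrow> 0) at_top"
    by (rule tendsto_mult_left_zero)
qed simp

lemma deriv_nonpos_at_first_zero:
  fixes f :: "real \<Rightarrow> real"
  assumes "(f has_real_derivative D) (at t0 within {0..})" "t0 > 0" "f t0 = 0"
    and "\<And>s. 0 \<le> s \<Longrightarrow> s < t0 \<Longrightarrow> f s > 0"
  shows "D \<le> 0"
proof (rule ccontr)
  assume "\<not> D \<le> 0"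
  then obtain e where e: "e > 0" "\<And>h. h > 0 \<Longrightarrow> t0 - h \<in> {0..} \<Longrightarrow> h < e \<Longrightarrow> f (t0 - h) < f t0"
    using has_real_derivative_pos_inc_left[OF assms(1)] by force
  have "f (t0 - min (e/2) t0) < 0" using e assms(2,3) by (intro e(2)[THEN order.strict_trans2]) auto
  moreover have "f (t0 - min (e/2) t0) > 0" using e assms(2) by (intro assms(4)) auto
  ultimately show False by simp
qed

lemma first_nonpositive_time:
  fixes g :: "'a::euclidean_space \<times> real \<Rightarrow> real"
  assumes K: "compact K" and cont: "continuous_on (K \<times> {0..}) g"
    and init: "\<And>u. u \<in> K \<Longrightarrow> g (u, 0) > 0"
    and v: "v \<in> K" "t \<ge> 0" "g (v, t) \<le> 0"
  obtains t0 w where "t0 > 0" "w \<in> K" "g (w, t0) = 0"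
    "\<And>s u. 0 \<le> s \<Longrightarrow> s < t0 \<Longrightarrow> u \<in> K \<Longrightarrow> g (u, s) > 0"
    "\<And>u. u \<in> K \<Longrightarrow> g (u, t0) \<ge> 0"
proof -
  define T where "T = {t. \<exists>u. u \<in> K \<and> (u, t) \<in> (K \<times> {0..}) \<inter> g -` {..0}}"
  have "closed ((K \<times> {0..}) \<inter> g -` {..0})"
    by (rule continuous_closed_preimage[OF cont]) (auto intro: closed_Times compact_imp_closed K)
  then have closed: "closed T" unfolding T_def by (rule closed_compact_projection[OF K])
  have "t \<in> T" using v by (auto simp: T_def)
  moreover have below: "bdd_below T" by (rule bdd_belowI[of _ 0]) (auto simp: T_def)
  ultimately have "Inf T \<in> T" using closed closed_contains_Inf by blast
  then obtain w where w: "w \<in> K" "Inf T \<ge> 0" "g (w, Inf T) \<le> 0" by (auto simp: T_def)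
  have before: "g (u, s) > 0" if "0 \<le> s" "s < Inf T" "u \<in> K" for s u
    using that cInf_lower[OF _ below, of s] by (force simp: T_def)
  have pos: "Inf T > 0" using w init[OF w(1)] by (cases "Inf T = 0") auto
  have after: "g (u, Inf T) \<ge> 0" if u: "u \<in> K" for u
  proof (rule tendsto_lowerbound)
    have "continuous_on {0..} (\<lambda>s. g (u, s))"
      by (rule continuous_on_compose2[OF cont]) (auto intro!: continuous_intros u)
    then have "isCont (\<lambda>s. g (u, s)) (Inf T)"
      using pos by (intro continuous_on_interior) auto
    then show "((\<lambda>s. g (u, s)) \<longlongrightarrow> g (u, Inf T)) (at_left (Inf T))"
      by (rule tendsto_within_subset[OF isContD]) simp

    show "\<forall>\<^sub>F s in at_left (Inf T). 0 \<le> g (u, s)"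
      using eventually_at_left_real[OF pos] by eventually_elim (auto intro!: less_imp_le before u)

  qed simp
  show thesis using that[OF pos w(1) _ before after] w(3) after[OF w(1)] by simp
qed

section \<open>The Lindblad flow\<close>

lemma lindblad_add: "lindblad H L K (X + Y) = lindblad H L K X + lindblad H L K Y"
  unfolding lindblad_def
  by (simp add: matrix_add_ldistrib matrix_add_rdistrib csc_add csc_diff scaleR_add_right
      sum.distrib[symmetric] algebra_simps)

lemma lindblad_scaleR: "lindblad H L K ((r::real) *\<^sub>R X) = r *\<^sub>R lindblad H L K X"
  unfolding lindblad_def
  by (simp add: matrix_mul_scaleR_left matrix_mul_scaleR_right csc_scaleR csc_diff
      scaleR_sum_right algebra_simps)

lemma lindblad_diff: "lindblad H L K (X - Y) = lindblad H L K X - lindblad H L K Y"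
  using lindblad_add[of H L K "X - Y" Y] by (simp add: algebra_simps)

lemma bounded_linear_lindblad: "bounded_linear (lindblad H L K)"
  by (rule linear_conv_bounded_linear[THEN iffD1], rule linearI)
     (simp_all add: lindblad_add lindblad_scaleR)

lemma lindblad_adj:
  assumes "hermitian H"
  shows "lindblad H L K (adj X) = adj (lindblad H L K X)"
proof -
  have "adj H = H" using assms by (simp add: hermitian_def)
  then show ?thesis
    unfolding lindblad_def
    by (simp add: adj_add adj_diff adj_csc adj_matrix_mul adj_scaleR adj_sum matrix_mul_assoc
        csc_diff_swap[of "\<i>"])
      (rule sum.cong[OF refl], simp add: diff_diff_eq add.commute)
qed

lemma trace_lindblad: "trace (lindblad H L K X) = 0"
proof -
  have hamiltonian: "trace (csc (- \<i>) (H ** X - X ** H)) = 0"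
    by (simp add: trace_csc trace_sub trace_mul_sym[of H X])
  have dissipator: "trace (L k ** X ** adj (L k) - (1/2) *\<^sub>R (adj (L k) ** L k ** X)
      - (1/2) *\<^sub>R (X ** adj (L k) ** L k)) = 0" for k
  proof -
    have "trace (L k ** X ** adj (L k)) = trace (adj (L k) ** L k ** X)"
      "trace (X ** adj (L k) ** L k) = trace (adj (L k) ** L k ** X)"
      by (metis trace_mul_sym matrix_mul_assoc)+
    then show ?thesis by (simp add: trace_sub trace_scaleR)
  qed
  show ?thesis unfolding lindblad_def by (simp add: trace_add trace_sum hamiltonian dissipator)
qed

lemma trace_mul_lindblad:
  assumes "Y ** H = H ** Y"
  shows "trace (Y ** lindblad H L K X) = trace (gen L {1..K} Y ** X)"
proof -
  have hamiltonian: "trace (Y ** csc (- \<i>) (H ** X - X ** H)) = 0"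
  proof -
    have "trace (Y ** (X ** H)) = trace (H ** Y ** X)" by (metis trace_mul_sym matrix_mul_assoc)
    also have "\<dots> = trace (Y ** H ** X)" by (simp add: assms)
    finally show ?thesis
      by (simp add: matrix_mul_csc_right trace_csc matrix_diff_ldistrib trace_sub matrix_mul_assoc)
  qed
  have dissipator: "trace (Y ** (L k ** X ** adj (L k) - (1/2) *\<^sub>R (adj (L k) ** L k ** X)
      - (1/2) *\<^sub>R (X ** adj (L k) ** L k))) = trace (gen_comp (L k) Y ** X)" for k
  proof -
    have "trace (Y ** L k ** X ** adj (L k)) = trace (adj (L k) ** Y ** L k ** X)"
      "trace (Y ** X ** adj (L k) ** L k) = trace (adj (L k) ** L k ** Y ** X)"
      by (metis trace_mul_sym matrix_mul_assoc)+
    then show ?thesis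
      by (simp add: gen_comp_def matrix_diff_ldistrib matrix_diff_rdistrib matrix_mul_scaleR_left
          matrix_mul_scaleR_right trace_sub trace_scaleR matrix_mul_assoc)
  qed
  show ?thesis
    unfolding lindblad_def gen_def
    by (simp add: matrix_add_ldistrib trace_add matrix_mul_sum_right matrix_mul_sum_left trace_sum
        hamiltonian dissipator)
qed

lemma lindblad_quadratic_form_kernel_nonneg:
  assumes psd: "psd \<tau>" and kernel: "\<tau> *v v = 0"
  shows "Re (cinner v (lindblad H L K \<tau> *v v)) \<ge> 0"
proof -
  have kernel': "cinner v (\<tau> *v w) = 0" for w
    using hermitian_cinner[OF psd_imp_hermitian[OF psd], of v w] kernel by simp
  have hamiltonian: "cinner v (csc (- \<i>) (H ** \<tau> - \<tau> ** H) *v v) = 0"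
    by (simp add: matrix_vector_mult_csc cinner_smult_right matrix_vector_mult_diff_rdistrib
        matrix_vector_mul_assoc[symmetric] cinner_diff_right kernel kernel')
  have dissipator: "Re (cinner v ((L k ** \<tau> ** adj (L k) - (1/2) *\<^sub>R (adj (L k) ** L k ** \<tau>)
      - (1/2) *\<^sub>R (\<tau> ** adj (L k) ** L k)) *v v)) \<ge> 0" for k
  proof -
    have "cinner v (L k *v (\<tau> *v (adj (L k) *v v)))
        = cinner (adj (L k) *v v) (\<tau> *v (adj (L k) *v v))"
      by (rule cinner_adj)
    moreover have "Re (cinner (adj (L k) *v v) (\<tau> *v (adj (L k) *v v))) \<ge> 0"
      using psd by (simp add: psd_iff_cinner)
    ultimately show ?thesis
      by (simp add: matrix_vector_mult_diff_rdistrib matrix_vector_mult_scaleR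
          matrix_vector_mul_assoc[symmetric] cinner_diff_right cinner_scaleR_right kernel kernel')
  qed
  show ?thesis
    unfolding lindblad_def
    by (simp add: matrix_vector_mult_add_rdistrib matrix_vector_mult_sum cinner_add_right
        cinner_sum_right hamiltonian Re_sum sum_nonneg dissipator)
qed

lemma lindblad_preserves_hermitian:
  fixes \<rho> :: "real \<Rightarrow> 'n::finite cmat"
  assumes H: "hermitian H"
    and sol: "\<And>t. t \<ge> 0 \<Longrightarrow> (\<rho> has_vector_derivative lindblad H L K (\<rho> t)) (at t within {0..})"
    and "hermitian (\<rho> 0)" and "t \<ge> 0"
  shows "hermitian (\<rho> t)"
proof -
  define X where "X s = \<rho> s - adj (\<rho> s)" for s
  have "X t = 0"
  proof (rule linear_ode_zero_solution[OF bounded_linear_lindblad])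
    show "X 0 = 0" using \<open>hermitian (\<rho> 0)\<close> by (simp add: X_def hermitian_def)
    fix s :: real assume s: "s \<ge> 0"
    have "(X has_vector_derivative (lindblad H L K (\<rho> s) - adj (lindblad H L K (\<rho> s))))
        (at s within {0..})"
      unfolding X_def
      by (intro has_vector_derivative_diff sol[OF s]
          bounded_linear.has_vector_derivative[OF bounded_linear_adj])
    then show "(X has_vector_derivative lindblad H L K (X s)) (at s within {0..})"
      by (simp add: X_def lindblad_adj[OF H, symmetric] lindblad_diff)
  qed fact
  then show ?thesis by (simp add: X_def hermitian_def)
qed

lemma lindblad_preserves_trace:
  fixes \<rho> :: "real \<Rightarrow> 'n::finite cmat"
  assumes sol: "\<And>t. t \<ge> 0 \<Longrightarrow> (\<rho> has_vector_derivative lindblad H L K (\<rho> t)) (at t within {0..})"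
    and t: "t \<ge> 0"
  shows "trace (\<rho> t) = trace (\<rho> 0)"
proof -
  obtain c where c: "\<And>s. s \<in> {0..} \<Longrightarrow> trace (\<rho> s) = c"
  proof (rule has_vector_derivative_zero_constant[of "{0::real..}" "\<lambda>s. trace (\<rho> s)"])
    fix s :: real assume "s \<in> {0..}"
    then have "((\<lambda>s. trace (\<rho> s)) has_vector_derivative trace (lindblad H L K (\<rho> s)))
        (at s within {0..})"
      by (intro bounded_linear.has_vector_derivative[OF bounded_linear_trace] sol) auto
    then show "((\<lambda>s. trace (\<rho> s)) has_vector_derivative 0) (at s within {0..})"
      by (simp add: trace_lindblad)
  qed (auto intro: convex_real_interval)
  show ?thesis using c[of t] c[of 0] t by simp
qed

lemma lindblad_quadratic_form_at_shifted_kernel: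
  assumes psd: "psd (X + mat (complex_of_real r))" and kernel: "(X + mat (complex_of_real r)) *v w = 0"
    and r: "r \<ge> 0" and C: "Re (cinner w (lindblad H L K (mat 1) *v w)) \<le> C"
  shows "Re (cinner w (lindblad H L K X *v w)) \<ge> - r * C"
proof -
  have "0 \<le> Re (cinner w (lindblad H L K (X + mat (complex_of_real r)) *v w))"
    by (rule lindblad_quadratic_form_kernel_nonneg[OF psd kernel])
  also have "\<dots> = Re (cinner w (lindblad H L K X *v w)) + r * Re (cinner w (lindblad H L K (mat 1) *v w))"
    by (simp add: mat_of_real lindblad_add lindblad_scaleR matrix_vector_mult_add_rdistrib
        matrix_vector_mult_scaleR cinner_add_right cinner_scaleR_right)
  also have "\<dots> \<le> Re (cinner w (lindblad H L K X *v w)) + r * C"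
    using C r by (simp add: mult_left_mono)
  finally show ?thesis by simp
qed

lemma has_real_derivative_quadratic_form:
  fixes \<rho> :: "real \<Rightarrow> 'n::finite cmat"
  assumes "(\<rho> has_vector_derivative D) F"
  shows "((\<lambda>s. Re (cinner w (\<rho> s *v w))) has_real_derivative Re (cinner w (D *v w))) F"
proof -
  have "bounded_linear (\<lambda>M::'n cmat. Re (cinner w (M *v w)))"

    by (rule linear_conv_bounded_linear[THEN iffD1], rule linearI)
       (simp_all add: matrix_vector_mult_add_rdistrib matrix_vector_mult_scaleR cinner_add_right
        cinner_scaleR_right)
  from bounded_linear.has_vector_derivative[OF this assms] show ?thesis
    by (simp add: has_real_derivative_iff_has_vector_derivative)
qed

lemma lindblad_perturbed_quadratic_form_pos:
  fixes \<rho> :: "real \<Rightarrow> 'n::finite cmat"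
  assumes H: "hermitian H"
    and sol: "\<And>t. t \<ge> 0 \<Longrightarrow> (\<rho> has_vector_derivative lindblad H L K (\<rho> t)) (at t within {0..})"
    and psd0: "psd (\<rho> 0)"
    and C: "\<And>u. u \<in> sphere 0 1 \<Longrightarrow> Re (cinner u (lindblad H L K (mat 1) *v u)) \<le> C"
    and \<epsilon>: "\<epsilon> > 0" and t: "t \<ge> 0" and v: "v \<in> sphere 0 1"
  shows "Re (cinner v (\<rho> t *v v)) + \<epsilon> * exp ((C + 1) * t) > 0"
proof (rule ccontr)
  define e where "e s = \<epsilon> * exp ((C + 1) * s)" for s
  define g where "g p = Re (cinner (fst p) (\<rho> (snd p) *v fst p)) + e (snd p)" for p
  assume "\<not> ?thesis"
  then have "g (v, t) \<le> 0" by (simp add: g_def e_def)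
  have "continuous_on {0..} \<rho>"
    using sol by (auto intro: has_vector_derivative_continuous simp: continuous_on_eq_continuous_within)
  then have "continuous_on (sphere 0 1 \<times> {0..}) (\<lambda>p::(complex^'n) \<times> real. \<rho> (snd p))"
    by (rule continuous_on_compose2[OF _ continuous_on_snd]) auto
  then have cont: "continuous_on (sphere 0 1 \<times> {0..}) g"
    unfolding g_def[abs_def] e_def
    by (intro continuous_intros continuous_on_quadratic_form continuous_on_fst continuous_on_id)
  have init: "g (u, 0) > 0" if "u \<in> sphere 0 1" for u
    using psd0 \<epsilon> by (simp add: g_def e_def psd_iff_cinner add_nonneg_pos)
  obtain t0 w where t0: "t0 > 0" and w: "w \<in> sphere 0 1" "g (w, t0) = 0"
    and before: "\<And>s u. 0 \<le> s \<Longrightarrow> s < t0 \<Longrightarrow> u \<in> sphere 0 1 \<Longrightarrow> g (u, s) > 0"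
    and nonneg: "\<And>u. u \<in> sphere 0 1 \<Longrightarrow> g (u, t0) \<ge> 0"
    using first_nonpositive_time[OF compact_sphere cont init v t \<open>g (v, t) \<le> 0\<close>] by blast
  define \<tau> where "\<tau> = \<rho> t0 + mat (complex_of_real (e t0))"
  have "hermitian (\<rho> t0)"
    using lindblad_preserves_hermitian[OF H sol psd_imp_hermitian[OF psd0]] t0 by simp
  then have h\<tau>: "hermitian \<tau>"
    by (simp add: \<tau>_def hermitian_def adj_add adj_def mat_def vec_eq_iff)
  have form_\<tau>: "Re (cinner u (\<tau> *v u)) = g (u, t0)" if "u \<in> sphere 0 1" for u
    using that by (simp add: \<tau>_def g_def matrix_vector_mult_add_rdistrib matrix_vector_mult_mat
        cinner_add_right cinner_smult_right cinner_self)
  have "psd \<tau>"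
    using nonneg form_\<tau> by (simp add: hermitian_psd_iff_unit_sphere[OF h\<tau>])
  moreover have "cinner w (\<tau> *v w) = 0"
    using form_\<tau>[OF w(1)] w(2) hermitian_quadratic_form_real[OF h\<tau>] by (simp add: complex_eq_iff)
  ultimately have "Re (cinner w (lindblad H L K (\<rho> t0) *v w)) \<ge> - e t0 * C"
    using \<epsilon> C[OF w(1)] unfolding \<tau>_def
    by (intro lindblad_quadratic_form_at_shifted_kernel psd_quadratic_form_zero_imp_kernel)
      (simp_all add: e_def)
  moreover have "e t0 > 0" using \<epsilon> by (simp add: e_def)
  ultimately have D: "Re (cinner w (lindblad H L K (\<rho> t0) *v w)) + (C + 1) * e t0 > 0"
    by (simp add: algebra_simps)
  have "((\<lambda>s. Re (cinner w (\<rho> s *v w))) has_real_derivative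
      Re (cinner w (lindblad H L K (\<rho> t0) *v w))) (at t0 within {0..})"
    using has_real_derivative_quadratic_form[OF sol] t0 by simp
  moreover have "(e has_real_derivative (C + 1) * e t0) (at t0 within {0..})"
    unfolding e_def by (auto intro!: derivative_eq_intros)
  ultimately have "((\<lambda>s. g (w, s)) has_real_derivative
      Re (cinner w (lindblad H L K (\<rho> t0) *v w)) + (C + 1) * e t0) (at t0 within {0..})"
    unfolding g_def by (simp add: DERIV_add)
  then have "Re (cinner w (lindblad H L K (\<rho> t0) *v w)) + (C + 1) * e t0 \<le> 0"
    using t0 w(2) before[OF _ _ w(1)] by (rule deriv_nonpos_at_first_zero)
  with D show False by simp
qed

lemma lindblad_preserves_psd:
  fixes \<rho> :: "real \<Rightarrow> 'n::finite cmat"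
  assumes H: "hermitian H"
    and sol: "\<And>t. t \<ge> 0 \<Longrightarrow> (\<rho> has_vector_derivative lindblad H L K (\<rho> t)) (at t within {0..})"
    and psd0: "psd (\<rho> 0)" and t: "t \<ge> 0"
  shows "psd (\<rho> t)"
proof -
  let ?f = "\<lambda>u. Re (cinner u (lindblad H L K (mat 1) *v u))"
  have "continuous_on (sphere 0 1) ?f"
    by (intro continuous_intros continuous_on_quadratic_form)
  then obtain u0 where "\<forall>u\<in>sphere (0::complex^'n) 1. ?f u \<le> ?f u0"
    using continuous_attains_sup[OF compact_sphere _ \<open>continuous_on (sphere 0 1) ?f\<close>] by auto

  then have C: "\<And>u. u \<in> sphere 0 1 \<Longrightarrow> ?f u \<le> ?f u0" by blast


  have "Re (cinner v (\<rho> t *v v)) \<ge> 0" if v: "v \<in> sphere 0 1" for v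
  proof (rule field_le_epsilon)
    fix \<delta> :: real assume "\<delta> > 0"
    define \<epsilon> where "\<epsilon> = \<delta> / exp ((?f u0 + 1) * t)"

    have "\<epsilon> > 0" using \<open>\<delta> > 0\<close> by (simp add: \<epsilon>_def)
    from lindblad_perturbed_quadratic_form_pos[OF H sol psd0 C this t v]
    show "0 \<le> Re (cinner v (\<rho> t *v v)) + \<delta>" by (simp add: \<epsilon>_def)
  qed
  moreover have "hermitian (\<rho> t)"
    using lindblad_preserves_hermitian[OF H sol psd_imp_hermitian[OF psd0] t] .
  ultimately show ?thesis using hermitian_psd_iff_unit_sphere by blast
qed

lemma lindblad_preserves_density:
  fixes \<rho> :: "real \<Rightarrow> 'n::finite cmat"
  assumes "hermitian H"
    and "\<And>t. t \<ge> 0 \<Longrightarrow> (\<rho> has_vector_derivative lindblad H L K (\<rho> t)) (at t within {0..})"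
    and "density (\<rho> 0)" and "t \<ge> 0"
  shows "density (\<rho> t)"
  using lindblad_preserves_psd[OF assms(1,2) _ assms(4)] lindblad_preserves_trace[OF assms(2,4)]
    assms(3) by (simp add: density_def)

section \<open>Lyapunov functions and ground-state stability\<close>

lemma gen_add: "gen L S (X + Y) = gen L S X + gen L S Y"
  unfolding gen_def gen_comp_def
  by (simp add: matrix_add_ldistrib matrix_add_rdistrib scaleR_add_right sum.distrib[symmetric]
      algebra_simps)

lemma gen_scaleR: "gen L S ((r::real) *\<^sub>R X) = r *\<^sub>R gen L S X"
  unfolding gen_def gen_comp_def
  by (simp add: matrix_mul_scaleR_left matrix_mul_scaleR_right scaleR_sum_right algebra_simps)

lemma gen_diff: "gen L S (X - Y) = gen L S X - gen L S Y"
  using gen_add[of L S "X - Y" Y] by (simp add: algebra_simps)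

lemma gen_mat: "gen L S (mat (complex_of_real r)) = 0"
  unfolding mat_of_real gen_scaleR by (simp add: gen_def gen_comp_def)

lemma gen_split:
  assumes "M \<le> K"
  shows "gen L {1..K} X = gen L {1..M} X + gen L {M+1..K} X"
proof -
  have "{1..K} = {1..M} \<union> {M+1..K}" "{1..M} \<inter> {M+1..K} = {}" using assms by auto
  then show ?thesis unfolding gen_def by (simp add: sum.union_disjoint)
qed

lemma loewner_le_add:
  "loewner_le A B \<Longrightarrow> loewner_le C D \<Longrightarrow> loewner_le (A + C) (B + D)"
  unfolding loewner_le_def using psd_add[of "B - A" "D - C"] by (simp add: diff_add_eq add_diff_add)

lemma lyapunov_trace_tendsto_zero:
  fixes \<rho> :: "real \<Rightarrow> 'n::finite cmat"
  assumes H: "hermitian H"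
    and sol: "\<And>t. t \<ge> 0 \<Longrightarrow> (\<rho> has_vector_derivative lindblad H L K (\<rho> t)) (at t within {0..})"
    and psd0: "psd (\<rho> 0)"
    and Y: "psd Y" "Y ** H = H ** Y" and c: "c > 0"
    and lyapunov: "loewner_le (gen L {1..K} Y) ((- c) *\<^sub>R Y)"
  shows "((\<lambda>t. trace (Y ** \<rho> t)) \<longlongrightarrow> 0) at_top"
proof -
  define f where "f t = Re (trace (Y ** \<rho> t))" for t
  have psd_t: "psd (\<rho> t)" if "t \<ge> 0" for t
    using lindblad_preserves_psd[OF H sol psd0 that] .
  have real: "trace (Y ** \<rho> t) = complex_of_real (f t)" if "t \<ge> 0" for t
    using trace_mul_psd_nonneg(1)[OF Y(1) psd_t[OF that]] by (simp add: f_def complex_eq_iff)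
  have deriv: "(f has_real_derivative Re (trace (gen L {1..K} Y ** \<rho> t))) (at t within {0..})"
    if "t \<ge> 0" for t
    using bounded_linear.has_vector_derivative[OF bounded_linear_compose[OF bounded_linear_Re
          bounded_linear_trace_mul[of Y]] sol[OF that]]
    by (simp add: f_def[abs_def] has_real_derivative_iff_has_vector_derivative
        trace_mul_lindblad[OF Y(2)])
  have decay: "Re (trace (gen L {1..K} Y ** \<rho> t)) \<le> (- c) * f t" if "t \<ge> 0" for t
  proof -
    have "Re (trace (((- c) *\<^sub>R Y - gen L {1..K} Y) ** \<rho> t)) \<ge> 0"
      using lyapunov psd_t[OF that] by (simp add: loewner_le_def trace_mul_psd_nonneg(2))
    then show ?thesis
      by (simp add: matrix_diff_rdistrib matrix_mul_scaleR_left trace_sub trace_scaleR f_def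
          del: scaleR_minus_left)
  qed
  have "(f \<longlongrightarrow> 0) at_top"
    using c deriv decay trace_mul_psd_nonneg(2)[OF Y(1) psd_t]
    by (intro tendsto_zero_if_deriv_le_neg_mult) (simp_all add: f_def)
  then have "((\<lambda>t. complex_of_real (f t)) \<longlongrightarrow> 0) at_top"
    using tendsto_of_real by force
  moreover have "\<forall>\<^sub>F t in at_top. complex_of_real (f t) = trace (Y ** \<rho> t)"
    using eventually_ge_at_top[of 0] by eventually_elim (simp add: real)
  ultimately show ?thesis by (rule Lim_transform_eventually)
qed

lemma gs_stable_if_lyapunov:
  fixes X :: "'n::finite cmat"
  defines "Y \<equiv> X - mat (complex_of_real (min_eig X))"
  assumes H: "hermitian H" and X: "hermitian X" "X ** H = H ** X" and c: "c > 0"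
    and lyapunov: "loewner_le (gen L {1..K} Y) ((- c) *\<^sub>R Y)"
  shows "gs_stable H L K X"
  unfolding gs_stable_def
proof (intro allI impI, elim conjE)
  fix \<rho> :: "real \<Rightarrow> 'n cmat"
  assume density0: "density (\<rho> 0)"
    and sol: "\<forall>t\<ge>0. (\<rho> has_vector_derivative lindblad H L K (\<rho> t)) (at t within {0..})"
  have "Y ** H = H ** Y"
    using X(2) by (simp add: Y_def matrix_diff_ldistrib matrix_diff_rdistrib mat_matrix_mul
        matrix_mul_mat)
  then have "((\<lambda>t. trace (Y ** \<rho> t)) \<longlongrightarrow> 0) at_top"
    using lyapunov_trace_tendsto_zero[OF H _ _ _ _ c lyapunov] sol density0
      hermitian_psd_minus_min_eig[OF X(1)]
    by (simp add: Y_def density_def)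
  from tendsto_add[OF this tendsto_const]
  have "((\<lambda>t. trace (Y ** \<rho> t) + complex_of_real (min_eig X)) \<longlongrightarrow> complex_of_real (min_eig X))
      at_top"
    by simp
  moreover have "\<forall>\<^sub>F t in at_top. trace (Y ** \<rho> t) + complex_of_real (min_eig X) = trace (X ** \<rho> t)"
    using eventually_ge_at_top[of 0]
  proof eventually_elim
    case (elim t)
    have "trace (\<rho> t) = 1"
      using lindblad_preserves_density[OF H sol[rule_format] density0 elim] by (simp add: density_def)

    then show ?case
      by (simp add: Y_def matrix_diff_rdistrib trace_sub mat_matrix_mul trace_csc)
  qed
  ultimately show "((\<lambda>t. trace (X ** \<rho> t)) \<longlongrightarrow> complex_of_real (min_eig X)) at_top"
    by (rule Lim_transform_eventually)
qed

theorem theorem19: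
  fixes H :: "'n::finite cmat" and W L :: "nat \<Rightarrow> 'n cmat"
    and N M K n :: nat and c :: real
  defines "Wt \<equiv> (\<lambda>m. \<Sum>l\<in>{1..m}. W l)"
  defines "d \<equiv> (\<lambda>m. min_eig (Wt m))"
  assumes H_herm: "hermitian H"
    and W_herm: "\<And>l. l \<in> {1..N} \<Longrightarrow> hermitian (W l)"
    and W_comm: "\<And>l. l \<in> {1..N} \<Longrightarrow> W l ** H = H ** W l"
    and W_psd: "\<And>l. l \<in> {1..N} \<Longrightarrow> psd (W l)"
    and W_min: "\<And>l. l \<in> {1..N} \<Longrightarrow> min_eig (W l) = 0"
    and n: "1 \<le> n" "n < N"
    and MK: "M \<le> K"
    and c: "c > 0"
    and hypM: "loewner_le (gen L {1..M} (Wt n - mat (complex_of_real (d n))))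
                          ((- c) *\<^sub>R (Wt n - mat (complex_of_real (d n))))"
    and hypK: "loewner_le (gen L {1..K} (W (n+1)) + gen L {M+1..K} (Wt n))
                          ((- c) *\<^sub>R W (n+1) + mat (complex_of_real (c * (d (n+1) - d n))))"
  shows "gs_stable H L K (Wt (n+1))"
proof (rule gs_stable_if_lyapunov[OF H_herm _ _ c])
  have Wt_Suc: "Wt (n+1) = Wt n + W (n+1)" unfolding Wt_def by simp
  show "hermitian (Wt (n+1))"
    unfolding Wt_def using n by (intro hermitian_sum W_herm) auto
  show "Wt (n+1) ** H = H ** Wt (n+1)"
    unfolding Wt_def matrix_mul_sum_left matrix_mul_sum_right using n W_comm by (intro sum.cong) auto
  have "gen L {1..K} (Wt (n+1) - mat (complex_of_real (d (n+1))))
      = gen L {1..M} (Wt n - mat (complex_of_real (d n)))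
        + (gen L {1..K} (W (n+1)) + gen L {M+1..K} (Wt n))"
    unfolding Wt_Suc using gen_split[OF MK, of L "Wt n"] by (simp add: gen_add gen_diff gen_mat add_ac)

  moreover have "(- c) *\<^sub>R (Wt (n+1) - mat (complex_of_real (d (n+1))))
      = (- c) *\<^sub>R (Wt n - mat (complex_of_real (d n)))
        + ((- c) *\<^sub>R W (n+1) + mat (complex_of_real (c * (d (n+1) - d n))))"
    unfolding Wt_Suc mat_of_real by (simp add: algebra_simps)

  ultimately show "loewner_le (gen L {1..K} (Wt (n+1) - mat (complex_of_real (min_eig (Wt (n+1))))))
      ((- c) *\<^sub>R (Wt (n+1) - mat (complex_of_real (min_eig (Wt (n+1))))))"
    using loewner_le_add[OF hypM hypK] by (simp add: d_def)
qed

end
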